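(* Let $N\geq 10^{100000}$ be a real number, let $f_N(x)=\dfrac{\log N+\log(x-1)}{\log x}$ for real $x>1$, and let $g_{k,N}(x)=(-1)^k f_N^{(k)}(x)$. Define polynomials $P_{1,1}(t)=1$, $P_{2,2}(t)=t+2$, $P_{3,3}(t)=2t^2+6t+6$, $P_{4,4}(t)=6t^3+22t^2+36t+24$, $P_{5,5}(t)=24t^4+100t^3+210t^2+240t+120$, $P_{6,6}(t)=120t^5+548t^4+1350t^3+2040t^2+1800t+720$ (equivalently $P_{1,1}=1$ and $P_{k+1,k+1}(t)=(kt+k+1)P_{k,k}(t)-tP_{k,k}'(t)$). Then for $1\leq k\leq 6$ and $x\geq 10^5$, $$\frac{0.999999\,P_{k,k}(\log x)\log N}{x^k\log^{k+1}x}<g_{k,N}(x)<\frac{P_{k,k}(\log x)\log N}{x^k\log^{k+1}x}.$$ Moreover, for $2\leq k\leq 6$ and $x\geq 10^5$, $$\frac{(k-1)!\log N}{x^k\log^2 x}<g_{k,N}(x)<\frac{\tau_k\log N}{x^k\log^2 x},$$ where $\tau_2=1.17372$, $\tau_3=2.56643$, $\tau_4=8.19823$, $\tau_5=34.4344$, $\tau_6=179.227$; and for $x\geq 10^5$, $$\frac{0.999999\log N}{x\log^2 x}<g_{1,N}(x)<\frac{\log N}{x\log^2 x}.$$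
   Context: $f_N^{(k)}$ denotes the $k$-th derivative of $f_N$ with respect to $x$; $\log$ is the natural logarithm. *)

theory Defs
  imports "HOL-Analysis.Analysis"
begin

definition fN :: "real \<Rightarrow> real \<Rightarrow> real" where
  "fN N x = (ln N + ln (x - 1)) / ln x"

definition gN :: "nat \<Rightarrow> real \<Rightarrow> real \<Rightarrow> real" where
  "gN k N x = (-1) ^ k * (deriv ^^ k) (fN N) x"

definition Pkk :: "nat \<Rightarrow> real \<Rightarrow> real" where
  "Pkk k t = (if k = 1 then 1
     else if k = 2 then t + 2
     else if k = 3 then 2*t^2 + 6*t + 6
     else if k = 4 then 6*t^3 + 22*t^2 + 36*t + 24
     else if k = 5 then 24*t^4 + 100*t^3 + 210*t^2 + 240*t + 120
     else if k = 6 then 120*t^5 + 548*t^4 + 1350*t^3 + 2040*t^2 + 1800*t + 720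
     else 0)"

definition tau :: "nat \<Rightarrow> real" where
  "tau k = (if k = 2 then 1.17372
     else if k = 3 then 2.56643
     else if k = 4 then 8.19823
     else if k = 5 then 34.4344
     else if k = 6 then 179.227
     else 0)"

end

theory Submission
  imports Defs "HOL-Analysis.Harmonic_Numbers"
begin

(* Write f_N(x) = (ln N + ln (x - 1)) * h_0(x) with h_0 = 1 / ln x, and let
   h_k = (-1)^k h_0^(k) = P_k(ln x) / (x^k ln^(k+1) x).  Leibniz's rule expresses g_(k,N)
   through h_0, ..., h_k.  The same rule applied to the constant ln x * h_0(x) = 1 shows
   that replacing ln (x - 1) by ln x and 1/(x - 1)^j by 1/x^j would turn g_(k,N) into exactly
   ln N * h_k.  Hence g_(k,N) = ln N * h_k - E_k with an explicit defect
   0 < E_k <= (2/x) B_k, where B_k = Q_k(ln x) / (x^k ln^(k+1) x) has the same shape as h_k.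
   Since x >= 700 ln^2 x for x >= 10^5 and ln N >= 230258, the factor 2/x is at most
   ln N / (8 * 10^7 ln^2 x), and every claimed bound reduces to an inequality between
   polynomials in t = ln x >= 11.51292, checked monomial by monomial. *)

lemma sum_binomial_Suc_shift:
  fixes c :: "nat \<Rightarrow> real" and u :: real
  shows "(\<Sum>j=1..Suc k. real (Suc k choose j) * fact (j - 1) / u ^ j * c (Suc k - j))
       = (\<Sum>j=1..k. real (k choose j) * fact (j - 1) / u ^ j * c (Suc k - j))
       + (\<Sum>j=0..k. real (k choose j) * fact j / u ^ Suc j * c (k - j))"
proof -
  have "(\<Sum>j=1..Suc k. real (Suc k choose j) * fact (j - 1) / u ^ j * c (Suc k - j))
      = (\<Sum>i=0..k. real (Suc k choose Suc i) * fact i / u ^ Suc i * c (k - i))"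
    by (simp only: One_nat_def sum.shift_bounds_cl_Suc_ivl) simp
  also have "\<dots> = (\<Sum>i=0..k. real (k choose Suc i) * fact i / u ^ Suc i * c (k - i))
      + (\<Sum>i=0..k. real (k choose i) * fact i / u ^ Suc i * c (k - i))"
    by (simp add: ring_distribs add_divide_distrib sum.distrib add.commute)
  also have "(\<Sum>i=0..k. real (k choose Suc i) * fact i / u ^ Suc i * c (k - i))
      = (\<Sum>j=1..Suc k. real (k choose j) * fact (j - 1) / u ^ j * c (Suc k - j))"
    by (simp only: One_nat_def sum.shift_bounds_cl_Suc_ivl) simp
  also have "\<dots> = (\<Sum>j=1..k. real (k choose j) * fact (j - 1) / u ^ j * c (Suc k - j))"
    by simp
  finally show ?thesis .
qed

(* If h i = (-1)^i (h 0)^(i), Leibniz's rule together with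
   (ln (x - a))^(j) = (-1)^(j-1) (j-1)! / (x - a)^j gives
   leibniz_log h a L k x = (-1)^k ((L + ln (x - a)) * h 0)^(k) (x). *)
definition leibniz_log :: "(nat \<Rightarrow> real \<Rightarrow> real) \<Rightarrow> real \<Rightarrow> real \<Rightarrow> nat \<Rightarrow> real \<Rightarrow> real" where
  "leibniz_log h a L k x = (L + ln (x - a)) * h k x
     - (\<Sum>j=1..k. real (k choose j) * fact (j - 1) / (x - a) ^ j * h (k - j) x)"

lemma has_real_derivative_leibniz_log:
  fixes h :: "nat \<Rightarrow> real \<Rightarrow> real"
  assumes "x > a" and h: "\<And>i. i \<le> k \<Longrightarrow> (h i has_real_derivative - h (Suc i) x) (at x)"
  shows "(leibniz_log h a L k has_real_derivative - leibniz_log h a L (Suc k) x) (at x)"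
proof -
  define A where "A j = real (k choose j) * fact j / (x - a) ^ Suc j * h (k - j) x" for j
  define B where "B j = real (k choose j) * fact (j - 1) / (x - a) ^ j * h (Suc k - j) x" for j
  have "x - a > 0" using assms(1) by simp
  have summand: "((\<lambda>y. real (k choose j) * fact (j - 1) / (y - a) ^ j * h (k - j) y)
      has_real_derivative - A j - B j) (at x)" if j: "j \<in> {1..k}" for j
  proof -
    define C where "C = real (k choose j) * fact (j - 1)"
    obtain i where i: "j = Suc i" "i < k" using j by (cases j) auto
    have pow: "((\<lambda>y. (y - a) ^ j) has_real_derivative real j * (x - a) ^ i) (at x)"
      by (rule DERIV_cong[OF DERIV_power[OF DERIV_diff[OF DERIV_ident DERIV_const]]]) (simp add: i)
    have "((\<lambda>y. C * (h (k - j) y / (y - a) ^ j)) has_real_derivative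
        C * ((- h (Suc (k - j)) x * (x - a) ^ j - h (k - j) x * (real j * (x - a) ^ i))
          / ((x - a) ^ j * (x - a) ^ j))) (at x)"
      using \<open>x - a > 0\<close> by (intro DERIV_cmult DERIV_divide h pow) auto
    moreover have "C * ((- h (Suc (k - j)) x * (x - a) ^ j - h (k - j) x * (real j * (x - a) ^ i))
          / ((x - a) ^ j * (x - a) ^ j)) = - A j - B j"
    proof -
      define u where "u = x - a"
      have "Suc (k - j) = Suc k - j" "fact j = real j * fact i" using i by auto
      then show ?thesis using \<open>x - a > 0\<close> i(1)
        by (simp add: A_def B_def C_def flip: u_def) (simp add: field_simps)
    qed
    ultimately show ?thesis
      by (simp add: C_def mult.assoc times_divide_eq_right mult.commute)
  qed
  have sum: "((\<lambda>y. \<Sum>j=1..k. real (k choose j) * fact (j - 1) / (y - a) ^ j * h (k - j) y)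
      has_real_derivative (\<Sum>j=1..k. - A j - B j)) (at x)"
    using summand by (rule DERIV_sum)
  have product: "((\<lambda>y. (L + ln (y - a)) * h k y) has_real_derivative
      h k x / (x - a) - (L + ln (x - a)) * h (Suc k) x) (at x)"
    using \<open>x - a > 0\<close> by (auto intro!: derivative_eq_intros h simp: field_simps)
  have "(\<Sum>j=1..Suc k. real (Suc k choose j) * fact (j - 1) / (x - a) ^ j * h (Suc k - j) x)
      = (\<Sum>j=1..k. B j) + (\<Sum>j=0..k. A j)"
    unfolding A_def B_def by (rule sum_binomial_Suc_shift)
  also have "(\<Sum>j=0..k. A j) = h k x / (x - a) + (\<Sum>j=1..k. A j)"
    by (simp add: sum.atLeast_Suc_atMost A_def)
  finally have pascal:
    "(\<Sum>j=1..Suc k. real (Suc k choose j) * fact (j - 1) / (x - a) ^ j * h (Suc k - j) x)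
      = (\<Sum>j=1..k. B j) + h k x / (x - a) + (\<Sum>j=1..k. A j)" by simp
  then have derivative_value:
    "h k x / (x - a) - (L + ln (x - a)) * h (Suc k) x - (\<Sum>j=1..k. - A j - B j)
      = - leibniz_log h a L (Suc k) x"
    by (simp only: leibniz_log_def) (simp add: sum_subtractf sum_negf algebra_simps)
  have "leibniz_log h a L k = (\<lambda>y. (L + ln (y - a)) * h k y
      - (\<Sum>j=1..k. real (k choose j) * fact (j - 1) / (y - a) ^ j * h (k - j) y))"
    by (simp add: leibniz_log_def fun_eq_iff)
  with DERIV_diff[OF product sum] derivative_value show ?thesis by simp
qed

lemma higher_deriv_leibniz_log:
  assumes h: "\<And>i y. i < n \<Longrightarrow> y > a \<Longrightarrow> (h i has_real_derivative - h (Suc i) y) (at y)"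
    and "k \<le> n" "x > a"
  shows "(deriv ^^ k) (\<lambda>y. (L + ln (y - a)) * h 0 y) x = (-1) ^ k * leibniz_log h a L k x"
  using assms(2,3)
proof (induction k arbitrary: x)
  case 0
  then show ?case by (simp add: leibniz_log_def)
next
  case (Suc k)
  have "\<forall>\<^sub>F y in nhds x.
      (deriv ^^ k) (\<lambda>y. (L + ln (y - a)) * h 0 y) y = (-1) ^ k * leibniz_log h a L k y"
    using eventually_nhds_in_open[of "{a<..}" x] Suc by (auto elim!: eventually_mono)
  then have "(deriv ^^ Suc k) (\<lambda>y. (L + ln (y - a)) * h 0 y) x
      = deriv (\<lambda>y. (-1) ^ k * leibniz_log h a L k y) x"
    by (simp add: deriv_cong_ev)
  also have "\<dots> = (-1) ^ k * (- leibniz_log h a L (Suc k) x)"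
    using Suc.prems by (intro DERIV_imp_deriv DERIV_cmult has_real_derivative_leibniz_log h) auto
  finally show ?case by simp
qed

lemma leibniz_log_vanishes:
  assumes h: "\<And>i y. i < n \<Longrightarrow> y > 1 \<Longrightarrow> (h i has_real_derivative - h (Suc i) y) (at y)"
    and h0: "\<And>y. y > 1 \<Longrightarrow> ln y * h 0 y = 1"
    and "1 \<le> k" "k \<le> n" "x > 1"
  shows "leibniz_log h 0 0 k x = 0"
proof -
  have "leibniz_log h 0 0 k y = (if k = 0 then 1 else 0)" if "k \<le> n" "y > 1" for k y
    using that
  proof (induction k arbitrary: y)
    case 0
    then show ?case using h0 by (simp add: leibniz_log_def)
  next
    case (Suc k)
    have "(leibniz_log h 0 0 k has_real_derivative - leibniz_log h 0 0 (Suc k) y) (at y)"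
      using Suc.prems by (intro has_real_derivative_leibniz_log h) auto
    then have "((\<lambda>_. if k = 0 then 1 else 0) has_real_derivative - leibniz_log h 0 0 (Suc k) y) (at y)"
      by (rule has_field_derivative_transform_within_open[where S = "{1<..}"])
        (use Suc in auto)
    then show ?case using DERIV_unique[OF _ DERIV_const] by fastforce
  qed
  then show ?thesis using assms(3-5) by simp
qed

definition log_defect :: "(nat \<Rightarrow> real \<Rightarrow> real) \<Rightarrow> nat \<Rightarrow> real \<Rightarrow> real" where
  "log_defect h k x = (ln x - ln (x - 1)) * h k x
     + (\<Sum>j=1..k. real (k choose j) * fact (j - 1) * (1 / (x - 1) ^ j - 1 / x ^ j) * h (k - j) x)"

definition defect_majorant :: "(nat \<Rightarrow> real \<Rightarrow> real) \<Rightarrow> nat \<Rightarrow> real \<Rightarrow> real" where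
  "defect_majorant h k x = h k x + (\<Sum>j=1..k. real (k choose j) * fact j / x ^ j * h (k - j) x)"

lemma leibniz_log_eq_defect:
  "leibniz_log h 1 L k x = L * h k x + leibniz_log h 0 0 k x - log_defect h k x"
  unfolding leibniz_log_def log_defect_def
  by (simp add: algebra_simps sum_subtractf)

lemma ln_diff_le:
  fixes x :: real
  assumes "2 \<le> x"
  shows "ln x - ln (x - 1) \<le> 2 / x"
proof -
  have "ln x - ln (x - 1) = ln (x / (x - 1))" using assms by (simp add: ln_div)
  also have "\<dots> \<le> x / (x - 1) - 1" using assms by (intro ln_le_minus_one) auto
  also have "\<dots> \<le> 2 / x" using assms by (simp add: field_simps)
  finally show ?thesis .
qed

lemma inverse_power_diff_le:
  fixes x :: real
  assumes "1 \<le> j" "2 * real j \<le> x"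
  shows "1 / (x - 1) ^ j - 1 / x ^ j \<le> 2 * real j / x ^ (j + 1)"
proof -
  define a where "a = real j / x"
  have "x \<ge> 2" using assms by linarith
  then have a: "0 \<le> a" "a \<le> 1/2" using assms by (auto simp: a_def field_simps)
  have "1 - a \<le> (1 - 1 / x) ^ j"
    using Bernoulli_inequality[of "- 1 / x" j] \<open>x \<ge> 2\<close> by (simp add: a_def)
  moreover have "(x - 1) ^ j = x ^ j * (1 - 1 / x) ^ j"
    using \<open>x \<ge> 2\<close> by (simp add: power_mult_distrib[symmetric] field_simps)
  ultimately have "x ^ j * (1 - a) \<le> (x - 1) ^ j"
    using \<open>x \<ge> 2\<close> by (simp add: mult_left_mono)
  then have "1 / (x - 1) ^ j \<le> 1 / (x ^ j * (1 - a))"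
    using a \<open>x \<ge> 2\<close> by (intro divide_left_mono) auto
  also have "\<dots> \<le> (1 + 2 * a) / x ^ j"
  proof -
    have "1 \<le> (1 + 2 * a) * (1 - a)"
      using mult_nonneg_nonneg[of a "1 - 2 * a"] a by (simp add: algebra_simps)
    then have "1 / (1 - a) \<le> 1 + 2 * a" using a by (simp add: divide_le_eq)
    then have "1 / (1 - a) / x ^ j \<le> (1 + 2 * a) / x ^ j"
      using \<open>x \<ge> 2\<close> by (intro divide_right_mono) auto
    then show ?thesis by (simp add: mult.commute)
  qed
  also have "\<dots> = 1 / x ^ j + 2 * real j / x ^ (j + 1)"
    using \<open>x \<ge> 2\<close> by (simp add: a_def field_simps)
  finally show ?thesis by simp
qed

lemma log_defect_pos:
  assumes "x > 1" "h k x > 0" "\<And>i. i \<le> k \<Longrightarrow> h i x \<ge> 0"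
  shows "log_defect h k x > 0"
proof -
  have "(x - 1) ^ j \<le> x ^ j" for j using assms(1) by (intro power_mono) auto
  then have "1 / x ^ j \<le> 1 / (x - 1) ^ j" for j using assms(1) by (intro divide_left_mono) auto
  then have "0 \<le> (\<Sum>j=1..k. real (k choose j) * fact (j - 1) * (1 / (x - 1) ^ j - 1 / x ^ j) * h (k - j) x)"
    using assms(3) by (intro sum_nonneg mult_nonneg_nonneg) auto
  moreover have "(ln x - ln (x - 1)) * h k x > 0" using assms(1,2) by simp
  ultimately show ?thesis unfolding log_defect_def by linarith
qed

lemma log_defect_le:
  assumes "2 \<le> x" "2 * real k \<le> x" "\<And>i. i \<le> k \<Longrightarrow> h i x \<ge> 0"
  shows "log_defect h k x \<le> 2 / x * defect_majorant h k x"
proof -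
  have "(ln x - ln (x - 1)) * h k x \<le> 2 / x * h k x"
    using ln_diff_le[OF assms(1)] assms(3)[of k] by (intro mult_right_mono) auto
  moreover have "real (k choose j) * fact (j - 1) * (1 / (x - 1) ^ j - 1 / x ^ j) * h (k - j) x
      \<le> 2 / x * (real (k choose j) * fact j / x ^ j * h (k - j) x)" if j: "j \<in> {1..k}" for j
  proof -
    have "real (k choose j) * fact (j - 1) * (1 / (x - 1) ^ j - 1 / x ^ j) * h (k - j) x
        \<le> real (k choose j) * fact (j - 1) * (2 * real j / x ^ (j + 1)) * h (k - j) x"
      using j assms inverse_power_diff_le[of j x]
      by (intro mult_right_mono mult_left_mono) auto
    also have "\<dots> = 2 / x * (real (k choose j) * fact j / x ^ j * h (k - j) x)"
      using j \<open>2 \<le> x\<close> by (cases j) (auto simp: field_simps)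
    finally show ?thesis .
  qed
  then have "(\<Sum>j=1..k. real (k choose j) * fact (j - 1) * (1 / (x - 1) ^ j - 1 / x ^ j) * h (k - j) x)
      \<le> (\<Sum>j=1..k. 2 / x * (real (k choose j) * fact j / x ^ j * h (k - j) x))"
    by (rule sum_mono)
  ultimately show ?thesis
    unfolding log_defect_def defect_majorant_def by (simp add: distrib_left sum_distrib_left)
qed

definition Pkk_ext :: "nat \<Rightarrow> real \<Rightarrow> real" where
  "Pkk_ext k t = (if k = 0 then 1 else Pkk k t)"

(* For k <= 6 this is (-1)^k times the k-th derivative of 1 / ln x. *)
definition inv_ln_deriv :: "nat \<Rightarrow> real \<Rightarrow> real" where
  "inv_ln_deriv k x = Pkk_ext k (ln x) / (x ^ k * ln x ^ (k + 1))"

lemma Pkk_ext_pos: "k \<le> 6 \<Longrightarrow> t > 0 \<Longrightarrow> Pkk_ext k t > 0"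
proof -
  assume "k \<le> 6" "t > 0"
  then have "k \<in> {0..6}" by simp
  then show ?thesis using \<open>t > 0\<close>
    by (auto simp: Pkk_ext_def Pkk_def add_pos_pos)
qed

lemma inv_ln_deriv_pos: "k \<le> 6 \<Longrightarrow> x > 1 \<Longrightarrow> inv_ln_deriv k x > 0"
  unfolding inv_ln_deriv_def using Pkk_ext_pos[of k "ln x"] by simp

lemma has_real_derivative_inv_ln_deriv:
  assumes "k < 6" "x > 1"
  shows "(inv_ln_deriv k has_real_derivative - inv_ln_deriv (Suc k) x) (at x)"
proof -
  have "x > 0" "ln x > 0" using assms(2) by auto
  moreover have "k = 0 \<or> k = 1 \<or> k = 2 \<or> k = 3 \<or> k = 4 \<or> k = 5" using assms(1) by auto
  ultimately show ?thesis
    unfolding inv_ln_deriv_def Pkk_ext_def Pkk_def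
    by (elim disjE) (auto intro!: derivative_eq_intros simp: field_simps eval_nat_numeral)
qed

lemma gN_eq_leibniz_log:
  assumes "k \<le> 6" "x > 1"
  shows "gN k N x = leibniz_log inv_ln_deriv 1 (ln N) k x"
proof -
  have "fN N = (\<lambda>y. (ln N + ln (y - 1)) * inv_ln_deriv 0 y)"
    by (simp add: fun_eq_iff fN_def inv_ln_deriv_def Pkk_ext_def)
  then show ?thesis
    using higher_deriv_leibniz_log[where n = 6 and h = inv_ln_deriv and a = 1,
        OF has_real_derivative_inv_ln_deriv assms]
    by (simp add: gN_def)
qed

lemma gN_eq_defect:
  assumes "1 \<le> k" "k \<le> 6" "x > 1"
  shows "gN k N x = ln N * inv_ln_deriv k x - log_defect inv_ln_deriv k x"
proof -
  have "leibniz_log inv_ln_deriv 0 0 k x = 0"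
    using assms
    by (intro leibniz_log_vanishes[where n = 6 and h = inv_ln_deriv,
          OF has_real_derivative_inv_ln_deriv])
      (auto simp: inv_ln_deriv_def Pkk_ext_def)
  then show ?thesis
    using gN_eq_leibniz_log[OF assms(2,3)] leibniz_log_eq_defect by simp
qed

definition majorant_poly :: "nat \<Rightarrow> real \<Rightarrow> real" where
  "majorant_poly k t = Pkk_ext k t + (\<Sum>j=1..k. real (k choose j) * fact j * t ^ j * Pkk_ext (k - j) t)"

lemma defect_majorant_inv_ln_deriv:
  assumes "x > 1"
  shows "defect_majorant inv_ln_deriv k x = majorant_poly k (ln x) / (x ^ k * ln x ^ (k + 1))"
proof -
  have "real (k choose j) * fact j / x ^ j * inv_ln_deriv (k - j) x
      = real (k choose j) * fact j * ln x ^ j * Pkk_ext (k - j) (ln x) / (x ^ k * ln x ^ (k + 1))"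
    if "j \<in> {1..k}" for j
  proof -
    have "x ^ k = x ^ j * x ^ (k - j)" "ln x ^ (k + 1) = ln x ^ j * ln x ^ (k - j + 1)"
      using that by (simp_all flip: power_add)
    then show ?thesis using assms by (simp add: inv_ln_deriv_def field_simps)
  qed
  then have "(\<Sum>j=1..k. real (k choose j) * fact j / x ^ j * inv_ln_deriv (k - j) x)
      = (\<Sum>j=1..k. real (k choose j) * fact j * ln x ^ j * Pkk_ext (k - j) (ln x))
        / (x ^ k * ln x ^ (k + 1))"
    by (simp add: sum_divide_distrib)
  then show ?thesis
    unfolding defect_majorant_def majorant_poly_def by (simp add: inv_ln_deriv_def add_divide_distrib)
qed

lemma sum_le_neg_ln_one_minus:
  fixes y :: real
  assumes "0 \<le> y" "y < 1"
  shows "(\<Sum>n<m. y ^ Suc n / real (Suc n)) \<le> - ln (1 - y)"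
proof -
  have "(\<lambda>n. (-1) ^ n * (1 / real (n + 1)) * ((1 - y) - 1) ^ Suc n)
      = (\<lambda>n. - (y ^ Suc n / real (Suc n)))"
    by (simp add: fun_eq_iff field_simps flip: power_mult_distrib)
  then have "ln (1 - y) = (\<Sum>n. - (y ^ Suc n / real (Suc n)))"
    using ln_series[of "1 - y"] assms by simp
  moreover have summable_terms: "summable (\<lambda>n. y ^ Suc n / real (Suc n))"
  proof (rule summable_comparison_test')
    show "summable (\<lambda>n. y ^ Suc n)" using assms by (simp add: summable_geometric_iff)
    show "norm (y ^ Suc n / real (Suc n)) \<le> y ^ Suc n" for n
    proof -
      have "y ^ Suc n / real (Suc n) \<le> y ^ Suc n / 1"
        using assms by (intro divide_left_mono) auto
      then show ?thesis using assms by simp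
    qed
  qed
  ultimately have "- ln (1 - y) = (\<Sum>n. y ^ Suc n / real (Suc n))"
    by (simp add: suminf_minus)
  moreover have "(\<Sum>n<m. y ^ Suc n / real (Suc n)) \<le> (\<Sum>n. y ^ Suc n / real (Suc n))"
    using summable_terms assms by (intro sum_le_suminf) auto
  ultimately show ?thesis by simp
qed

(* Six digits are needed: tau 2 = 1.17372 is only valid for ln x >= 11.5128, just below
   5 ln 10 = 11.51293. *)
lemma ln_10_ge: "2.302584 \<le> ln (10::real)"
proof -
  have "ln (10::real) = ln ((10/9) * (9/8) ^ 4 * (4/3) ^ 6)" by (simp add: power_divide)
  also have "\<dots> = ln (10/9) + ln ((9/8) ^ 4) + ln ((4/3) ^ 6)"
    by (subst ln_mult_pos, simp, simp)+ simp
  also have "\<dots> = ln (10/9) + 4 * ln (9/8) + 6 * ln (4/3)"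
    by (simp add: ln_realpow)
  also have "\<dots> = - ln (1 - 1/10) - 4 * ln (1 - 1/9) - 6 * ln (1 - 1/4)"
    by (simp add: ln_div)
  finally have "ln (10::real) = - ln (1 - 1/10) - 4 * ln (1 - 1/9) - 6 * ln (1 - 1/4)" .
  moreover have "(\<Sum>n<6. (1/10::real) ^ Suc n / real (Suc n)) \<le> - ln (1 - 1/10)"
    "(\<Sum>n<7. (1/9::real) ^ Suc n / real (Suc n)) \<le> - ln (1 - 1/9)"
    "(\<Sum>n<14. (1/4::real) ^ Suc n / real (Suc n)) \<le> - ln (1 - 1/4)"
    by (rule sum_le_neg_ln_one_minus; simp)+
  ultimately show ?thesis by (simp add: lessThan_nat_numeral power_divide)
qed

lemma ln_10_le: "ln (10::real) \<le> 2.3334"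
proof -
  have "ln (10::real) = ln (5/4) + ln (2 ^ 3)"
    using ln_mult_pos[of "5/4" "2 ^ 3"] by simp
  also have "\<dots> = ln (5/4) + 3 * ln 2"
    using ln_realpow[of 2 3] by simp
  finally have "ln (10::real) = ln (5/4) + 3 * ln 2" .
  moreover have "ln (5/4::real) \<le> 5/4 - 1" by (rule ln_le_minus_one) auto
  ultimately have "ln (10::real) \<le> 23334 / 10000" using ln2_le_25_over_36 by linarith
  then show ?thesis by simp
qed

lemma ln_ge_of_power_10_le:
  fixes x :: real
  assumes "10 ^ n \<le> x"
  shows "2.302584 * n \<le> ln x"
proof -
  have "0 < x" using assms by (rule less_le_trans[rotated]) simp
  then have "ln ((10::real) ^ n) \<le> ln x" using assms by (subst ln_le_cancel_iff) auto
  then have "real n * ln 10 \<le> ln x" by (simp add: ln_realpow)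
  moreover have "2.302584 * real n \<le> real n * ln 10"
    using ln_10_ge mult_left_mono[of "2.302584" "ln 10" "real n"] by (simp add: mult.commute)
  ultimately show ?thesis by linarith
qed

lemma sq_ln_le_of_power_10_5_le:
  fixes x :: real
  assumes "10 ^ 5 \<le> x"
  shows "700 * ln x ^ 2 \<le> x"
proof -
  define u where "u = x / 10 ^ 5"
  define s where "s = sqrt u"
  define t0 :: real where "t0 = 5 * ln 10"
  have "u \<ge> 1" "s \<ge> 1" "s ^ 2 = u" using assms by (auto simp: u_def s_def)
  have t0: "2 \<le> t0" "t0 \<le> 11.667" using ln_10_ge ln_10_le by (auto simp: t0_def)
  have "x = 10 ^ 5 * s ^ 2" using \<open>s ^ 2 = u\<close> by (simp add: u_def)
  then have "ln x = ln (10 ^ 5) + ln (s ^ 2)" using \<open>s \<ge> 1\<close> by (simp add: ln_mult_pos)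
  moreover have "ln ((10::real) ^ 5) = t0" using ln_realpow[of 10 5] by (simp add: t0_def)
  ultimately have "ln x = t0 + 2 * ln s" using \<open>s \<ge> 1\<close> by (simp add: ln_realpow)
  also have "\<dots> \<le> t0 * s"
    using ln_le_minus_one[of s] \<open>s \<ge> 1\<close> t0 mult_right_mono[of 2 t0 "s - 1"]
    by (simp add: algebra_simps)
  finally have "ln x ^ 2 \<le> (t0 * s) ^ 2"
    using assms by (intro power_mono) (auto intro: order.trans[rotated])
  also have "\<dots> = t0 ^ 2 * u" by (simp add: power_mult_distrib \<open>s ^ 2 = u\<close>)
  also have "\<dots> \<le> 11.667 ^ 2 * u"
    using t0 \<open>u \<ge> 1\<close> by (intro mult_right_mono power_mono) auto
  finally have "ln x ^ 2 \<le> 11.667 ^ 2 * (x / 10 ^ 5)" by (simp add: u_def)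
  then show ?thesis using assms by (simp add: power2_eq_square)
qed

lemma mult_power_le_power_Suc:
  fixes c t :: real
  assumes "0 \<le> c" "c \<le> t"
  shows "c \<le> t" "c * t \<le> t ^ 2" "c * t ^ 2 \<le> t ^ 3" "c * t ^ 3 \<le> t ^ 4" "c * t ^ 4 \<le> t ^ 5"
    "c * t ^ 5 \<le> t ^ 6" "c * t ^ 6 \<le> t ^ 7" "c * t ^ 7 \<le> t ^ 8"
proof -
  have "c * t ^ n \<le> t ^ Suc n" for n
    using assms mult_right_mono[OF assms(2), of "t ^ n"] by (simp add: mult.commute)
  from this[of 0] this[of 1] this[of 2] this[of 3] this[of 4] this[of 5] this[of 6] this[of 7]
  show "c \<le> t" "c * t \<le> t ^ 2" "c * t ^ 2 \<le> t ^ 3" "c * t ^ 3 \<le> t ^ 4" "c * t ^ 4 \<le> t ^ 5"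
    "c * t ^ 5 \<le> t ^ 6" "c * t ^ 6 \<le> t ^ 7" "c * t ^ 7 \<le> t ^ 8"
    by (simp_all add: eval_nat_numeral)
qed

(* Folds the products t * (t * c) produced by eval_nat_numeral back into powers, so that
   linarith sees the monomials t ^ n as atoms. *)
lemma power_mult_collect:
  fixes a b :: real
  shows "a * (a * b) = a ^ 2 * b" "a * (a ^ n * b) = a ^ Suc n * b" "a * a = a ^ 2"
  by (simp_all add: power2_eq_square mult.assoc)

lemma majorant_poly_lt:
  fixes t :: real
  assumes "1 \<le> k" "k \<le> 6" "11 \<le> t"
  shows "majorant_poly k t < 80 * t ^ 2 * Pkk_ext k t"
proof -
  note monomials = mult_power_le_power_Suc[OF _ assms(3), simplified]
  have "k = 1 \<or> k = 2 \<or> k = 3 \<or> k = 4 \<or> k = 5 \<or> k = 6" using assms(1,2) by auto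
  then show ?thesis
    by (elim disjE; simp add: majorant_poly_def Pkk_ext_def Pkk_def eval_nat_numeral algebra_simps;
        simp add: power_mult_collect; use monomials in linarith)
qed

lemma majorant_poly_lt_lower_terms:
  fixes t :: real
  assumes "2 \<le> k" "k \<le> 6" "11 \<le> t"
  shows "majorant_poly k t < 80000000 * t ^ 2 * (Pkk_ext k t - fact (k - 1) * t ^ (k - 1))"
proof -
  note monomials = mult_power_le_power_Suc[OF _ assms(3), simplified]
  have "k = 2 \<or> k = 3 \<or> k = 4 \<or> k = 5 \<or> k = 6" using assms(1,2) by auto
  then show ?thesis
    by (elim disjE; simp add: majorant_poly_def Pkk_ext_def Pkk_def eval_nat_numeral algebra_simps;
        simp add: power_mult_collect; use monomials in linarith)
qed

lemma Pkk_le_tau: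
  fixes t :: real
  assumes "2 \<le> k" "k \<le> 6" "11.51292 \<le> t"
  shows "Pkk k t \<le> tau k * t ^ (k - 1)"
proof -
  have "1151292 / 100000 \<le> t" using assms(3) by simp
  note monomials = mult_power_le_power_Suc[OF _ this, simplified]
  have "k = 2 \<or> k = 3 \<or> k = 4 \<or> k = 5 \<or> k = 6" using assms(1,2) by auto
  then show ?thesis
    by (elim disjE; simp add: Pkk_def tau_def eval_nat_numeral algebra_simps;
        simp add: power_mult_collect; use monomials in linarith)
qed

lemma log_defect_inv_ln_deriv_bounds:
  assumes k: "1 \<le> k" "k \<le> 6" and x: "10 ^ 5 \<le> x" and L: "230258 \<le> L"
  shows "0 < log_defect inv_ln_deriv k x"
    "log_defect inv_ln_deriv k x \<le> L * majorant_poly k (ln x) / (80000000 * x ^ k * ln x ^ (k + 3))"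
proof -
  have "x > 1" using x by simp
  then have "ln x > 0" by simp
  have h_nonneg: "inv_ln_deriv i x \<ge> 0" if "i \<le> k" for i
    using inv_ln_deriv_pos[of i x] that k \<open>x > 1\<close> by simp
  show "0 < log_defect inv_ln_deriv k x"
    using log_defect_pos inv_ln_deriv_pos k \<open>x > 1\<close> h_nonneg by blast
  have "majorant_poly k (ln x) \<ge> 0"
    using Pkk_ext_pos[of _ "ln x"] \<open>ln x > 0\<close> k unfolding majorant_poly_def
    by (intro add_nonneg_nonneg sum_nonneg mult_nonneg_nonneg) (auto intro: less_imp_le)
  have "230258 * (700 * ln x ^ 2) \<le> L * x"
    using sq_ln_le_of_power_10_5_le[OF x] L by (intro mult_mono) auto
  then have "2 * 80000000 * ln x ^ 2 \<le> L * x"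
    using zero_le_power2[of "ln x"] by linarith
  then have "2 / x \<le> L / (80000000 * ln x ^ 2)"
    using \<open>x > 1\<close> \<open>ln x > 0\<close> by (simp add: field_simps)
  have "log_defect inv_ln_deriv k x \<le> 2 / x * defect_majorant inv_ln_deriv k x"
    using x k h_nonneg by (intro log_defect_le) auto
  also have "\<dots> = 2 / x * (majorant_poly k (ln x) / (x ^ k * ln x ^ (k + 1)))"
    using \<open>x > 1\<close> by (simp add: defect_majorant_inv_ln_deriv)
  also have "\<dots> \<le> L / (80000000 * ln x ^ 2) * (majorant_poly k (ln x) / (x ^ k * ln x ^ (k + 1)))"
    using \<open>2 / x \<le> _\<close> \<open>majorant_poly k (ln x) \<ge> 0\<close> \<open>x > 1\<close> by (intro mult_right_mono) auto
  also have "\<dots> = L * majorant_poly k (ln x) / (80000000 * x ^ k * ln x ^ (k + 3))"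
    unfolding power_add by (simp add: power2_eq_square eval_nat_numeral mult_ac)
  finally show "log_defect inv_ln_deriv k x
      \<le> L * majorant_poly k (ln x) / (80000000 * x ^ k * ln x ^ (k + 3))" .
qed

lemma gN_bounds_inv_ln_deriv:
  fixes N x :: real
  assumes N: "10 ^ 100000 \<le> N" and k: "1 \<le> k" "k \<le> 6" and x: "10 ^ 5 \<le> x"
  shows "0.999999 * ln N * inv_ln_deriv k x < gN k N x" "gN k N x < ln N * inv_ln_deriv k x"
proof -
  have L: "230258 \<le> ln N" using ln_ge_of_power_10_le[OF N] by simp
  have "x > 1" using x by simp
  have "11 \<le> ln x" using ln_ge_of_power_10_le[OF x] by simp
  have D: "x ^ k * ln x ^ (k + 1) > 0" using \<open>x > 1\<close> by simp
  note defect = log_defect_inv_ln_deriv_bounds[OF k x L]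
  have g: "gN k N x = ln N * inv_ln_deriv k x - log_defect inv_ln_deriv k x"
    using k \<open>x > 1\<close> by (rule gN_eq_defect)
  show "gN k N x < ln N * inv_ln_deriv k x" using g defect(1) by simp
  have "ln N * majorant_poly k (ln x) / (80000000 * x ^ k * ln x ^ (k + 3))
      < ln N * (80 * ln x ^ 2 * Pkk_ext k (ln x)) / (80000000 * x ^ k * ln x ^ (k + 3))"
    using majorant_poly_lt[OF k \<open>11 \<le> ln x\<close>] L \<open>x > 1\<close>
    by (intro divide_strict_right_mono mult_strict_left_mono) auto
  also have "\<dots> = 0.000001 * ln N * inv_ln_deriv k x"
    unfolding inv_ln_deriv_def power_add using D by (simp add: power2_eq_square eval_nat_numeral field_simps)
  finally show "0.999999 * ln N * inv_ln_deriv k x < gN k N x" using g defect(2) by simp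
qed

lemma gN_bounds_fact_tau:
  fixes N x :: real
  assumes N: "10 ^ 100000 \<le> N" and k: "2 \<le> k" "k \<le> 6" and x: "10 ^ 5 \<le> x"
  shows "fact (k - 1) * ln N / (x ^ k * ln x ^ 2) < gN k N x"
    "gN k N x < tau k * ln N / (x ^ k * ln x ^ 2)"
proof -
  have "1 \<le> k" using k by simp
  have L: "230258 \<le> ln N" using ln_ge_of_power_10_le[OF N] by simp
  have "x > 1" using x by simp
  have "11.51292 \<le> ln x" using ln_ge_of_power_10_le[OF x] by simp
  have split_power: "ln x ^ (k + 1) = ln x ^ 2 * ln x ^ (k - 1)" "ln x ^ k = ln x * ln x ^ (k - 1)"
    using k by (simp_all flip: power_add power_Suc)
  note defect = log_defect_inv_ln_deriv_bounds[OF \<open>1 \<le> k\<close> k(2) x L]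
  have g: "gN k N x = ln N * inv_ln_deriv k x - log_defect inv_ln_deriv k x"
    using \<open>1 \<le> k\<close> k(2) \<open>x > 1\<close> by (rule gN_eq_defect)
  have "ln N * majorant_poly k (ln x) / (80000000 * x ^ k * ln x ^ (k + 3))
      < ln N * (80000000 * ln x ^ 2 * (Pkk_ext k (ln x) - fact (k - 1) * ln x ^ (k - 1)))
        / (80000000 * x ^ k * ln x ^ (k + 3))"
    using majorant_poly_lt_lower_terms[OF k, of "ln x"] \<open>11.51292 \<le> ln x\<close> L \<open>x > 1\<close>
    by (intro divide_strict_right_mono mult_strict_left_mono) auto
  also have "\<dots> = ln N * inv_ln_deriv k x - fact (k - 1) * ln N / (x ^ k * ln x ^ 2)"
    unfolding inv_ln_deriv_def power_add split_power(1) using \<open>x > 1\<close>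
    by (simp add: power2_eq_square eval_nat_numeral field_simps split_power(2))
  finally show "fact (k - 1) * ln N / (x ^ k * ln x ^ 2) < gN k N x" using g defect(2) by simp
  have "inv_ln_deriv k x = Pkk k (ln x) / ln x ^ (k - 1) / (x ^ k * ln x ^ 2)"
    unfolding inv_ln_deriv_def split_power(1) using k by (simp add: Pkk_ext_def field_simps)
  also have "\<dots> \<le> tau k / (x ^ k * ln x ^ 2)"
    using Pkk_le_tau[OF k \<open>11.51292 \<le> ln x\<close>] \<open>x > 1\<close>
    by (intro divide_right_mono) (auto simp: divide_le_eq)
  finally have "ln N * inv_ln_deriv k x \<le> ln N * (tau k / (x ^ k * ln x ^ 2))"
    using L by (intro mult_left_mono) auto
  then show "gN k N x < tau k * ln N / (x ^ k * ln x ^ 2)" using g defect(1) by (simp add: mult.commute)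
qed

theorem lemma3p1:
  fixes N :: real
  assumes "N \<ge> 10 ^ 100000"
  shows "(\<forall>k::nat. \<forall>x::real. 1 \<le> k \<and> k \<le> 6 \<and> x \<ge> 10 ^ 5 \<longrightarrow>
            0.999999 * Pkk k (ln x) * ln N / (x ^ k * ln x ^ (k + 1)) < gN k N x \<and>
            gN k N x < Pkk k (ln x) * ln N / (x ^ k * ln x ^ (k + 1)))
       \<and> (\<forall>k::nat. \<forall>x::real. 2 \<le> k \<and> k \<le> 6 \<and> x \<ge> 10 ^ 5 \<longrightarrow>
            fact (k - 1) * ln N / (x ^ k * ln x ^ 2) < gN k N x \<and>
            gN k N x < tau k * ln N / (x ^ k * ln x ^ 2))
       \<and> (\<forall>x::real. x \<ge> 10 ^ 5 \<longrightarrow>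
            0.999999 * ln N / (x * ln x ^ 2) < gN 1 N x \<and>
            gN 1 N x < ln N / (x * ln x ^ 2))"
proof (intro conjI allI impI)
  fix k :: nat and x :: real
  assume "1 \<le> k \<and> k \<le> 6 \<and> x \<ge> 10 ^ 5"
  then show "0.999999 * Pkk k (ln x) * ln N / (x ^ k * ln x ^ (k + 1)) < gN k N x"
    "gN k N x < Pkk k (ln x) * ln N / (x ^ k * ln x ^ (k + 1))"
    using gN_bounds_inv_ln_deriv[OF assms, of k x] by (simp_all add: inv_ln_deriv_def Pkk_ext_def mult_ac)
next
  fix k :: nat and x :: real
  assume "2 \<le> k \<and> k \<le> 6 \<and> x \<ge> 10 ^ 5"
  then show "fact (k - 1) * ln N / (x ^ k * ln x ^ 2) < gN k N x"
    "gN k N x < tau k * ln N / (x ^ k * ln x ^ 2)"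
    using gN_bounds_fact_tau[OF assms, of k x] by simp_all
next
  fix x :: real
  assume "x \<ge> 10 ^ 5"
  then show "0.999999 * ln N / (x * ln x ^ 2) < gN 1 N x" "gN 1 N x < ln N / (x * ln x ^ 2)"
    using gN_bounds_inv_ln_deriv[OF assms, of 1 x]
    by (simp_all add: inv_ln_deriv_def Pkk_ext_def Pkk_def power2_eq_square)
qed

end
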